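(* $\mathsf{FindHS}_{\boldsymbol{\Sigma}^0_1} \times \mathsf{FindHS}_{\boldsymbol{\Sigma}^0_1} \le_{\mathrm{sW}} \mathsf{FindHS}_{\boldsymbol{\Sigma}^0_1}$.
   Context: Strong Weihrauch reducibility: $f\le_{\mathrm{sW}} g$ iff there are computable $\Phi,\Psi$ on Baire space with $\Psi\circ G\circ\Phi$ realizing $f$ for every realizer $G$ of $g$. $f\times g$ is the parallel product $(x,z)\mapsto f(x)\times g(z)$. The Ramsey space $[\mathbb{N}]^\mathbb{N}$ is the set of strictly increasing functions $\mathbb{N}\to\mathbb{N}$ with Baire-space topology; $fg=f\circ g$. For $P\subseteq[\mathbb{N}]^\mathbb{N}$, $f$ is homogeneous for $P$ if either $fg\in P$ for all $g\in[\mathbb{N}]^\mathbb{N}$ or $fg\notin P$ for all $g$; $\mathrm{HS}(P)$ is the set of homogeneous solutions. Open sets of $[\mathbb{N}]^\mathbb{N}$ are named by enumerations of sets of finite strictly increasing strings whose cones have union the set. $\mathsf{FindHS}_{\boldsymbol{\Sigma}^0_1}$: input an open $P$ with $\mathrm{HS}(P)\cap P\ne\emptyset$, output any element of $\mathrm{HS}(P)\cap P$. *)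

theory Defs
  imports Main "HOL-Library.Nat_Bijection"
begin

type_synonym baire = "nat \<Rightarrow> nat"

datatype recf = Zero | Succ | Proj nat | Comp recf "recf list" | Prim recf recf | Mn recf

inductive eval :: "recf \<Rightarrow> nat list \<Rightarrow> nat \<Rightarrow> bool" where
  eval_Zero: "eval Zero xs 0"
| eval_Succ: "eval Succ (x # xs) (Suc x)"
| eval_Proj: "i < length xs \<Longrightarrow> eval (Proj i) xs (xs ! i)"
| eval_Comp: "length ys = length gs \<Longrightarrow> (\<forall>i<length gs. eval (gs ! i) xs (ys ! i))
              \<Longrightarrow> eval f ys y \<Longrightarrow> eval (Comp f gs) xs y"
| eval_Prim0: "eval f xs y \<Longrightarrow> eval (Prim f g) (0 # xs) y"
| eval_PrimS: "eval (Prim f g) (n # xs) r \<Longrightarrow> eval g (r # n # xs) y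
              \<Longrightarrow> eval (Prim f g) (Suc n # xs) y"
| eval_Mn: "eval f (y # xs) 0 \<Longrightarrow> (\<forall>z<y. \<exists>v. eval f (z # xs) (Suc v))
              \<Longrightarrow> eval (Mn f) xs y"

text \<open>A (total HOL) function F on Baire space is computable on the set D if some
  partial recursive M, given an output position k and (the code of) a finite prefix of
  the input p, either outputs 0 ("not yet"), diverges, or outputs v+1, where v is
  then necessarily F p k; and for every k some prefix yields an answer.  This is the
  usual notion of a partial computable functional whose domain contains D and which
  agrees with F on D.\<close>

definition prefix_code :: "baire \<Rightarrow> nat \<Rightarrow> nat" where
  "prefix_code p n = list_encode (map p [0..<n])"

definition computable_on :: "baire set \<Rightarrow> (baire \<Rightarrow> baire) \<Rightarrow> bool" where
  "computable_on D F \<longleftrightarrow> (\<exists>M. \<forall>p\<in>D. \<forall>k.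
      (\<exists>n. eval M [k, prefix_code p n] (Suc (F p k))) \<and>
      (\<forall>n v. eval M [k, prefix_code p n] (Suc v) \<longrightarrow> v = F p k))"

text \<open>A problem is given on the level of names: a set D of names of instances and a
  relation R, where R p r means that r is a name of a solution of the instance named by p.\<close>

definition realizes :: "baire set \<Rightarrow> (baire \<Rightarrow> baire \<Rightarrow> bool) \<Rightarrow> (baire \<Rightarrow> baire) \<Rightarrow> bool" where
  "realizes D R G \<longleftrightarrow> (\<forall>p\<in>D. R p (G p))"

definition sW_reducible ::
  "baire set \<Rightarrow> (baire \<Rightarrow> baire \<Rightarrow> bool) \<Rightarrow> baire set \<Rightarrow> (baire \<Rightarrow> baire \<Rightarrow> bool) \<Rightarrow> bool" where
  "sW_reducible D1 R1 D2 R2 \<longleftrightarrow> (\<exists>\<Phi> \<Psi>.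
      computable_on D1 \<Phi> \<and>
      computable_on {G (\<Phi> p) | G p. realizes D2 R2 G \<and> p \<in> D1} \<Psi> \<and>
      (\<forall>G. realizes D2 R2 G \<longrightarrow> realizes D1 R1 (\<Psi> \<circ> G \<circ> \<Phi>)))"

definition evens :: "baire \<Rightarrow> baire" where "evens p = (\<lambda>n. p (2 * n))"
definition odds :: "baire \<Rightarrow> baire" where "odds p = (\<lambda>n. p (2 * n + 1))"

definition par_dom :: "baire set \<Rightarrow> baire set \<Rightarrow> baire set" where
  "par_dom D1 D2 = {p. evens p \<in> D1 \<and> odds p \<in> D2}"

definition par_rel :: "(baire \<Rightarrow> baire \<Rightarrow> bool) \<Rightarrow> (baire \<Rightarrow> baire \<Rightarrow> bool) \<Rightarrow> baire \<Rightarrow> baire \<Rightarrow> bool" where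
  "par_rel R1 R2 p r \<longleftrightarrow> R1 (evens p) (evens r) \<and> R2 (odds p) (odds r)"

definition RS :: "baire set" where "RS = {f. strict_mono f}"

definition HS :: "baire set \<Rightarrow> baire set" where
  "HS P = {f \<in> RS. (\<forall>g\<in>RS. f \<circ> g \<in> P) \<or> (\<forall>g\<in>RS. f \<circ> g \<notin> P)}"

text \<open>Names of open sets: p i = 0 means "nothing enumerated at step i", p i = c + 1
  enumerates the finite string with code c (list_decode c), which must be strictly increasing.\<close>

definition open_name :: "baire \<Rightarrow> bool" where
  "open_name p \<longleftrightarrow> (\<forall>i c. p i = Suc c \<longrightarrow> sorted_wrt (<) (list_decode c))"

definition open_of :: "baire \<Rightarrow> baire set" where
  "open_of p = {g \<in> RS. \<exists>i c. p i = Suc c \<and>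
      map g [0..<length (list_decode c)] = list_decode c}"

definition FindHS_dom :: "baire set" where
  "FindHS_dom = {p. open_name p \<and> HS (open_of p) \<inter> open_of p \<noteq> {}}"

definition FindHS_rel :: "baire \<Rightarrow> baire \<Rightarrow> bool" where
  "FindHS_rel p r \<longleftrightarrow> r \<in> HS (open_of p) \<inter> open_of p"

end

theory Submission
  imports Defs "HOL-Library.Sublist"
begin

(* Given names of open sets P and Q, enumerate the open set R of all increasing h for which
   some initial segment of length at least 2 has strictly increasing coordinate sequences
   (under the Cantor pairing) extending a string enumerated into P and one enumerated into Q.
   If f and g are homogeneous solutions lying in P and Q, then n \<mapsto> <f n, g n> is one lying
   in R. Conversely, if h \<in> HS(R) \<inter> R, then homogeneity applied to the shifts j \<mapsto> j + m forces
   both coordinate functions of h to be strictly increasing, and they are then homogeneous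
   solutions lying in P and Q. Both directions of the reduction are computable because each
   output value depends on at most two input values at positions computed by total recursive
   functions, and the conditions to be checked are decidable on codes of finite lists. *)

section \<open>Total recursive functions\<close>

lemma eval_deterministic: "eval M xs y \<Longrightarrow> eval M xs y' \<Longrightarrow> y = y'"
proof (induction arbitrary: y' rule: eval.induct)
  case (eval_Comp ys gs xs f y)
  from eval_Comp.prems show ?case
  proof (cases rule: eval.cases)
    case (eval_Comp ys')
    with eval_Comp.hyps eval_Comp.IH(1) have "ys = ys'"
      by (intro nth_equalityI) auto
    with eval_Comp.IH(2) local.eval_Comp show ?thesis by simp
  qed
next
  case (eval_PrimS f g n xs r y)
  from eval_PrimS.prems show ?case
    by (cases rule: eval.cases) (use eval_PrimS.IH in auto)
next
  case (eval_Mn f y xs)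
  from eval_Mn.prems show ?case
  proof (cases rule: eval.cases)
    case eval_Mn
    show ?thesis
    proof (rule linorder_cases)
      assume "y < y'"
      with local.eval_Mn eval_Mn.IH(1) show ?thesis by fastforce
    next
      assume "y' < y"
      with local.eval_Mn eval_Mn.IH(2) show ?thesis by fastforce
    qed
  qed
qed (blast elim: eval.cases)+

definition recursive :: "nat \<Rightarrow> (nat list \<Rightarrow> nat) \<Rightarrow> bool" where
  "recursive n f \<longleftrightarrow> (\<exists>M. \<forall>xs. length xs = n \<longrightarrow> eval M xs (f xs))"

lemma recursive_cong:
  "recursive n f \<Longrightarrow> (\<And>xs. length xs = n \<Longrightarrow> f xs = g xs) \<Longrightarrow> recursive n g"
  unfolding recursive_def by metis

lemma recursive_zero: "recursive n (\<lambda>_. 0)"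
  unfolding recursive_def using eval_Zero by blast

lemma recursive_proj: "i < n \<Longrightarrow> recursive n (\<lambda>xs. xs ! i)"
  unfolding recursive_def using eval_Proj by metis

lemma recursive_Suc_hd: "recursive (Suc n) (\<lambda>xs. Suc (hd xs))"
  unfolding recursive_def
proof (intro exI allI impI)
  fix xs :: "nat list"
  assume "length xs = Suc n"
  then show "eval Succ xs (Suc (hd xs))"
    by (cases xs) (auto intro: eval_Succ)
qed

lemma recursive_comp:
  assumes "recursive m f" and "length gs = m" and "\<And>g. g \<in> set gs \<Longrightarrow> recursive n g"
  shows "recursive n (\<lambda>xs. f (map (\<lambda>g. g xs) gs))"
proof -
  obtain Mf where Mf: "\<And>ys. length ys = length gs \<Longrightarrow> eval Mf ys (f ys)"
    using assms(1,2) unfolding recursive_def by blast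
  from assms(3) obtain Mg
    where Mg: "\<And>g xs. g \<in> set gs \<Longrightarrow> length xs = n \<Longrightarrow> eval (Mg g) xs (g xs)"
    unfolding recursive_def by metis
  have "eval (Comp Mf (map Mg gs)) xs (f (map (\<lambda>g. g xs) gs))" if "length xs = n" for xs
    by (rule eval_Comp[where ys="map (\<lambda>g. g xs) gs"]) (use Mf Mg that in auto)
  then show ?thesis
    unfolding recursive_def by blast
qed

lemma recursive_primrec:
  assumes "recursive n f" and "recursive (Suc (Suc n)) (\<lambda>zs. g (zs ! 0) (zs ! 1) (drop 2 zs))"
    and "\<And>ys. F 0 ys = f ys" and "\<And>x ys. F (Suc x) ys = g (F x ys) x ys"
  shows "recursive (Suc n) (\<lambda>xs. F (hd xs) (tl xs))"
proof -
  obtain Mf where Mf: "\<And>ys. length ys = n \<Longrightarrow> eval Mf ys (f ys)"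
    using assms(1) unfolding recursive_def by blast
  obtain Mg where Mg: "\<And>zs. length zs = Suc (Suc n) \<Longrightarrow> eval Mg zs (g (zs ! 0) (zs ! 1) (drop 2 zs))"
    using assms(2) unfolding recursive_def by blast
  have "eval (Prim Mf Mg) (x # ys) (F x ys)" if "length ys = n" for x ys
  proof (induction x)
    case 0
    then show ?case using Mf[OF that] by (simp add: assms(3) eval_Prim0)
  next
    case (Suc x)
    then show ?case using Mg[of "F x ys # x # ys"] that by (simp add: assms(4) eval_PrimS)
  qed
  then have "eval (Prim Mf Mg) xs (F (hd xs) (tl xs))" if "length xs = Suc n" for xs
    using that by (cases xs) auto
  then show ?thesis
    unfolding recursive_def by blast
qed

lemma recursive_minimization:
  assumes "recursive (Suc n) f" and "\<And>xs. length xs = n \<Longrightarrow> \<exists>y. f (y # xs) = 0"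
  shows "recursive n (\<lambda>xs. LEAST y. f (y # xs) = 0)"
proof -
  obtain M where M: "\<And>ys. length ys = Suc n \<Longrightarrow> eval M ys (f ys)"
    using assms(1) unfolding recursive_def by blast
  have "eval (Mn M) xs (LEAST y. f (y # xs) = 0)" if "length xs = n" for xs
  proof (rule eval_Mn)
    show "eval M ((LEAST y. f (y # xs) = 0) # xs) 0"
      using M[of "_ # xs"] LeastI_ex[OF assms(2)[OF that]] that by (metis length_Cons)
    show "\<forall>z<LEAST y. f (y # xs) = 0. \<exists>v. eval M (z # xs) (Suc v)"
      using M[of "_ # xs"] not_less_Least that by (metis length_Cons not0_implies_Suc)
  qed
  then show ?thesis
    unfolding recursive_def by blast
qed

lemma recursive_comp1:
  assumes "recursive 1 (\<lambda>zs. F (zs ! 0))" and "recursive n f"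
  shows "recursive n (\<lambda>xs. F (f xs))"
  using recursive_comp[OF assms(1), of "[f]"] assms(2) by simp

lemma recursive_comp2:
  assumes "recursive 2 (\<lambda>zs. F (zs ! 0) (zs ! 1))" and "recursive n f" and "recursive n g"
  shows "recursive n (\<lambda>xs. F (f xs) (g xs))"
  using recursive_comp[OF assms(1), of "[f, g]"] assms(2,3) by auto

lemma recursive_comp3:
  assumes "recursive 3 (\<lambda>zs. F (zs ! 0) (zs ! 1) (zs ! 2))"
    and "recursive n f" and "recursive n g" and "recursive n h"
  shows "recursive n (\<lambda>xs. F (f xs) (g xs) (h xs))"
  using recursive_comp[OF assms(1), of "[f, g, h]"] assms(2-4) by auto

lemma recursive_Suc:
  assumes "recursive n f"
  shows "recursive n (\<lambda>xs. Suc (f xs))"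
proof -
  have "recursive 1 (\<lambda>zs. Suc (zs ! 0))"
    unfolding One_nat_def
    by (rule recursive_cong[OF recursive_Suc_hd]) (auto simp: length_Suc_conv)
  from recursive_comp1[OF this assms] show ?thesis .
qed

lemma recursive_const: "recursive n (\<lambda>_. c)"
  by (induction c) (auto intro: recursive_zero recursive_Suc)

lemma recursive_hd: "recursive (Suc n) hd"
  by (rule recursive_cong[OF recursive_proj[of 0]]) (auto simp: length_Suc_conv)

lemma recursive_tl:
  assumes "recursive n f"
  shows "recursive (Suc n) (\<lambda>xs. f (tl xs))"
proof -
  have rec: "recursive (Suc n) (\<lambda>xs. f (map (\<lambda>g. g xs) (map (\<lambda>i xs. xs ! Suc i) [0..<n])))"
    by (rule recursive_comp[OF assms]) (auto intro: recursive_proj)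
  have "map (\<lambda>g. g xs) (map (\<lambda>i xs. xs ! Suc i) [0..<n]) = tl xs"
    if "length xs = Suc n" for xs :: "nat list"
    using that by (intro nth_equalityI) (auto simp: nth_tl)
  then show ?thesis
    by (intro recursive_cong[OF rec]) simp
qed

lemma recursive_add:
  assumes "recursive n f" and "recursive n g"
  shows "recursive n (\<lambda>xs. f xs + g xs)"
proof -
  have "recursive (Suc (Suc 0)) (\<lambda>xs. hd xs + hd (tl xs))"
    by (rule recursive_primrec[where F="\<lambda>x ys. x + hd ys" and g="\<lambda>r x ys. Suc r", OF recursive_hd])
      (auto intro: recursive_Suc recursive_proj)
  then have "recursive 2 (\<lambda>zs. zs ! 0 + zs ! 1)"
    unfolding numeral_2_eq_2 by (rule recursive_cong) (auto simp: length_Suc_conv)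
  from recursive_comp2[OF this assms] show ?thesis .
qed

lemma recursive_diff:
  assumes "recursive n f" and "recursive n g"
  shows "recursive n (\<lambda>xs. f xs - g xs)"
proof -
  have "recursive (Suc 0) (\<lambda>xs. hd xs - 1)"
    by (rule recursive_primrec[where F="\<lambda>x ys. x - 1" and g="\<lambda>r x ys. x", OF recursive_zero])
      (auto intro: recursive_proj)
  then have "recursive 1 (\<lambda>zs. zs ! 0 - 1)"
    unfolding One_nat_def by (rule recursive_cong) (auto simp: length_Suc_conv)
  then have "recursive (Suc (Suc (Suc 0))) (\<lambda>zs. zs ! 0 - 1)"
    by (rule recursive_comp1) (auto intro: recursive_proj)
  then have "recursive (Suc (Suc 0)) (\<lambda>xs. hd (tl xs) - hd xs)"
    by (intro recursive_primrec[where F="\<lambda>x ys. hd ys - x" and g="\<lambda>r x ys. r - 1", OF recursive_hd])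
      auto
  then have "recursive 2 (\<lambda>zs. zs ! 1 - zs ! 0)"
    unfolding numeral_2_eq_2 by (rule recursive_cong) (auto simp: length_Suc_conv)
  from recursive_comp2[OF this assms(2,1)] show ?thesis .
qed

lemma recursive_if_zero:
  assumes "recursive n c" and "recursive n f" and "recursive n g"
  shows "recursive n (\<lambda>xs. if c xs = 0 then f xs else g xs)"
proof -
  have "recursive (Suc (Suc (Suc 0))) (\<lambda>xs. if hd xs = 0 then hd (tl xs) else tl xs ! 1)"
  proof (rule recursive_primrec[where F="\<lambda>x ys. if x = 0 then hd ys else ys ! 1"
        and g="\<lambda>r x ys. ys ! 1", OF recursive_hd])
    show "recursive (Suc (Suc (Suc (Suc 0)))) (\<lambda>zs. drop 2 zs ! 1)"
      by (rule recursive_cong[OF recursive_proj[of 3]]) auto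
  qed auto
  then have "recursive 3 (\<lambda>zs. if zs ! 0 = 0 then zs ! 1 else zs ! 2)"
    unfolding numeral_3_eq_3 by (rule recursive_cong) (auto simp: length_Suc_conv)
  from recursive_comp3[OF this assms] show ?thesis .
qed

section \<open>Decidable predicates\<close>

definition decidable :: "nat \<Rightarrow> (nat list \<Rightarrow> bool) \<Rightarrow> bool" where
  "decidable n P \<longleftrightarrow> recursive n (\<lambda>xs. of_bool (P xs))"

lemma recursive_if:
  assumes "decidable n P" and "recursive n f" and "recursive n g"
  shows "recursive n (\<lambda>xs. if P xs then f xs else g xs)"
  using recursive_if_zero[OF assms(1)[unfolded decidable_def] assms(3,2)]
  by (rule recursive_cong) simp

lemma decidable_less:
  assumes "recursive n f" and "recursive n g"
  shows "decidable n (\<lambda>xs. f xs < g xs)"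
proof -
  have "recursive n (\<lambda>xs. if g xs - f xs = 0 then 0 else 1)"
    using assms by (intro recursive_if_zero recursive_diff recursive_const)
  then show ?thesis
    unfolding decidable_def by (rule recursive_cong) simp
qed

lemma decidable_le:
  assumes "recursive n f" and "recursive n g"
  shows "decidable n (\<lambda>xs. f xs \<le> g xs)"
proof -
  have "recursive n (\<lambda>xs. if f xs - g xs = 0 then 1 else 0)"
    using assms by (intro recursive_if_zero recursive_diff recursive_const)
  then show ?thesis
    unfolding decidable_def by (rule recursive_cong) simp
qed

lemma decidable_conj:
  assumes "decidable n P" and "decidable n Q"
  shows "decidable n (\<lambda>xs. P xs \<and> Q xs)"
proof -
  have "recursive n (\<lambda>xs. if P xs then of_bool (Q xs) else 0)"
    using assms by (intro recursive_if recursive_const) (simp_all add: decidable_def)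
  then show ?thesis
    unfolding decidable_def by (rule recursive_cong) simp
qed

lemma decidable_neg:
  assumes "decidable n P"
  shows "decidable n (\<lambda>xs. \<not> P xs)"
proof -
  have "recursive n (\<lambda>xs. if P xs then 0 else 1)"
    using assms by (intro recursive_if recursive_const)
  then show ?thesis
    unfolding decidable_def by (rule recursive_cong) simp
qed

lemma decidable_disj: "decidable n P \<Longrightarrow> decidable n Q \<Longrightarrow> decidable n (\<lambda>xs. P xs \<or> Q xs)"
  using decidable_neg[OF decidable_conj[OF decidable_neg decidable_neg]] by simp

lemma decidable_eq: "recursive n f \<Longrightarrow> recursive n g \<Longrightarrow> decidable n (\<lambda>xs. f xs = g xs)"
  using decidable_conj[OF decidable_le decidable_le] by (simp add: order_eq_iff)

lemma recursive_Least:
  assumes "decidable (Suc n) (\<lambda>zs. P (hd zs) (tl zs))" and "\<And>xs. length xs = n \<Longrightarrow> \<exists>y. P y xs"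
  shows "recursive n (\<lambda>xs. LEAST y. P y xs)"
proof -
  have "recursive (Suc n) (\<lambda>zs. if P (hd zs) (tl zs) then 0 else 1)"
    using assms(1) by (intro recursive_if recursive_const)
  then have "recursive n
      (\<lambda>xs. LEAST y. (if P (hd (y # xs)) (tl (y # xs)) then 0 else 1) = (0::nat))"
    by (rule recursive_minimization) (use assms(2) in auto)
  then show ?thesis
    by (rule recursive_cong) (simp add: if_split_eq1)
qed

lemma Least_eq_bound_iff: "(LEAST y. y = b \<or> \<not> P y) = b \<longleftrightarrow> (\<forall>j<b. P (j::nat))"
proof
  assume "(LEAST y. y = b \<or> \<not> P y) = b"
  then show "\<forall>j<b. P j"
    by (metis (mono_tags, lifting) Least_le leD)
next
  assume "\<forall>j<b. P j"
  then show "(LEAST y. y = b \<or> \<not> P y) = b"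
    by (intro Least_equality) (auto simp flip: not_less)
qed

lemma decidable_all_less:
  assumes "decidable (Suc n) (\<lambda>zs. P (hd zs) (tl zs))" and "recursive n b"
  shows "decidable n (\<lambda>xs. \<forall>j<b xs. P j xs)"
proof -
  have "recursive n (\<lambda>xs. LEAST y. y = b xs \<or> \<not> P y xs)"
  proof (rule recursive_Least)
    show "decidable (Suc n) (\<lambda>zs. hd zs = b (tl zs) \<or> \<not> P (hd zs) (tl zs))"
      using assms by (intro decidable_disj decidable_eq decidable_neg recursive_hd recursive_tl)
  qed auto
  then have "decidable n (\<lambda>xs. (LEAST y. y = b xs \<or> \<not> P y xs) = b xs)"
    using assms(2) by (rule decidable_eq)
  then show ?thesis
    by (simp add: Least_eq_bound_iff)
qed

section \<open>Codes of pairs and lists\<close>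

lemma recursive_triangle:
  assumes "recursive n f"
  shows "recursive n (\<lambda>xs. triangle (f xs))"
proof -
  have "recursive (Suc 0) (\<lambda>xs. triangle (hd xs))"
  proof (rule recursive_primrec[where F="\<lambda>x ys. triangle x" and g="\<lambda>r x ys. Suc (r + x)",
        OF recursive_zero])
    show "recursive (Suc (Suc 0)) (\<lambda>zs. Suc (zs ! 0 + zs ! 1))"
      by (intro recursive_Suc recursive_add recursive_proj) auto
  qed auto
  then have "recursive 1 (\<lambda>zs. triangle (zs ! 0))"
    unfolding One_nat_def by (rule recursive_cong) (auto simp: length_Suc_conv)
  from recursive_comp1[OF this assms] show ?thesis .
qed

definition triangle_root :: "nat \<Rightarrow> nat" where
  "triangle_root z = (LEAST s. z < triangle (Suc s))"

lemma less_triangle_Suc: "z < triangle (Suc z)"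
  by (induction z) auto

lemma triangle_root_bounds:
  "triangle (triangle_root z) \<le> z" "z < triangle (Suc (triangle_root z))"
proof -
  show upper: "z < triangle (Suc (triangle_root z))"
    unfolding triangle_root_def using less_triangle_Suc by (rule LeastI)
  show "triangle (triangle_root z) \<le> z"
  proof (cases "triangle_root z")
    case (Suc s)
    then have "\<not> z < triangle (Suc s)"
      unfolding triangle_root_def by (metis lessI not_less_Least)
    with Suc show ?thesis by simp
  qed simp
qed

lemma prod_decode_by_triangle_root:
  "prod_decode z =
    (z - triangle (triangle_root z), triangle_root z - (z - triangle (triangle_root z)))"
proof -
  let ?s = "triangle_root z"
  have "z - triangle ?s \<le> ?s"
    using triangle_root_bounds[of z] by simp
  then have "prod_encode (z - triangle ?s, ?s - (z - triangle ?s)) = z"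
    using triangle_root_bounds(1)[of z] by (simp add: prod_encode_def)
  then show ?thesis
    by (metis prod_encode_inverse)
qed

lemma recursive_triangle_root:
  assumes "recursive n f"
  shows "recursive n (\<lambda>xs. triangle_root (f xs))"
  unfolding triangle_root_def
proof (rule recursive_Least)
  show "decidable (Suc n) (\<lambda>zs. f (tl zs) < triangle (Suc (hd zs)))"
    using assms by (intro decidable_less recursive_tl recursive_triangle recursive_Suc recursive_hd)
qed (use less_triangle_Suc in blast)

lemma recursive_fst_prod_decode:
  "recursive n f \<Longrightarrow> recursive n (\<lambda>xs. fst (prod_decode (f xs)))"
  unfolding prod_decode_by_triangle_root
  by (simp add: recursive_diff recursive_triangle recursive_triangle_root)

lemma recursive_snd_prod_decode:
  "recursive n f \<Longrightarrow> recursive n (\<lambda>xs. snd (prod_decode (f xs)))"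
  unfolding prod_decode_by_triangle_root
  by (simp add: recursive_diff recursive_triangle recursive_triangle_root)

definition code_hd :: "nat \<Rightarrow> nat" where
  "code_hd c = fst (prod_decode (c - 1))"

definition code_tl :: "nat \<Rightarrow> nat" where
  "code_tl c = snd (prod_decode (c - 1))"

definition code_nth :: "nat \<Rightarrow> nat \<Rightarrow> nat" where
  "code_nth c j = code_hd ((code_tl ^^ j) c)"

lemma list_decode_code_tl: "list_decode (code_tl c) = tl (list_decode c)"
proof (cases c)
  case 0
  have "prod_decode 0 = (0, 0)"
    using prod_encode_inverse[of "(0, 0)"] by (simp add: prod_encode_def)
  with 0 show ?thesis
    by (simp add: code_tl_def)
qed (simp add: code_tl_def split: prod.split)

lemma list_decode_code_tl_pow: "list_decode ((code_tl ^^ j) c) = drop j (list_decode c)"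
  by (induction j) (auto simp: list_decode_code_tl drop_Suc tl_drop)

lemma code_tl_pow_eq_0_iff: "(code_tl ^^ j) c = 0 \<longleftrightarrow> length (list_decode c) \<le> j"
  by (metis list_decode_code_tl_pow list_decode_eq list_decode.simps(1) drop_eq_Nil)

lemma code_nth_eq_nth: "j < length (list_decode c) \<Longrightarrow> code_nth c j = list_decode c ! j"
proof -
  assume j: "j < length (list_decode c)"
  then obtain c' where c': "(code_tl ^^ j) c = Suc c'"
    by (metis code_tl_pow_eq_0_iff not_le not0_implies_Suc)
  have "list_decode c ! j = hd (list_decode ((code_tl ^^ j) c))"
    using j by (simp add: list_decode_code_tl_pow hd_drop_conv_nth)
  also have "\<dots> = code_nth c j"
    by (simp add: c' code_nth_def code_hd_def split: prod.split)
  finally show ?thesis ..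
qed

lemma recursive_code_tl_pow:
  assumes "recursive n j" and "recursive n c"
  shows "recursive n (\<lambda>xs. (code_tl ^^ j xs) (c xs))"
proof -
  have "recursive (Suc (Suc 0)) (\<lambda>xs. (code_tl ^^ hd xs) (hd (tl xs)))"
  proof (rule recursive_primrec[where F="\<lambda>j ys. (code_tl ^^ j) (hd ys)" and g="\<lambda>r x ys. code_tl r",
        OF recursive_hd])
    show "recursive (Suc (Suc (Suc 0))) (\<lambda>zs. code_tl (zs ! 0))"
      unfolding code_tl_def
      by (intro recursive_snd_prod_decode recursive_diff recursive_proj recursive_const) simp
  qed auto
  then have "recursive 2 (\<lambda>zs. (code_tl ^^ zs ! 0) (zs ! 1))"
    unfolding numeral_2_eq_2 by (rule recursive_cong) (auto simp: length_Suc_conv)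
  from recursive_comp2[OF this assms] show ?thesis .
qed

lemma recursive_code_nth:
  "recursive n c \<Longrightarrow> recursive n j \<Longrightarrow> recursive n (\<lambda>xs. code_nth (c xs) (j xs))"
  unfolding code_nth_def code_hd_def
  by (intro recursive_fst_prod_decode recursive_diff recursive_code_tl_pow recursive_const)

lemma recursive_length_list_decode:
  assumes "recursive n c"
  shows "recursive n (\<lambda>xs. length (list_decode (c xs)))"
proof -
  have "recursive n (\<lambda>xs. LEAST j. (code_tl ^^ j) (c xs) = 0)"
  proof (rule recursive_Least)
    show "decidable (Suc n) (\<lambda>zs. (code_tl ^^ hd zs) (c (tl zs)) = 0)"
      using assms
      by (intro decidable_eq recursive_code_tl_pow recursive_hd recursive_tl recursive_zero)
  qed (use code_tl_pow_eq_0_iff in blast)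
  moreover have "(LEAST j. (code_tl ^^ j) c' = 0) = length (list_decode c')" for c'
    unfolding code_tl_pow_eq_0_iff by (rule Least_equality) auto
  ultimately show ?thesis
    by simp
qed

lemma recursive_div_2:
  assumes "recursive n f"
  shows "recursive n (\<lambda>xs. f xs div 2)"
proof -
  have "recursive n (\<lambda>xs. LEAST m. f xs < Suc (Suc (m + m)))"
  proof (rule recursive_Least)
    show "decidable (Suc n) (\<lambda>zs. f (tl zs) < Suc (Suc (hd zs + hd zs)))"
      using assms by (intro decidable_less recursive_Suc recursive_add recursive_tl recursive_hd)
  qed presburger
  moreover have "(LEAST m. k < Suc (Suc (m + m))) = k div 2" for k :: nat
    by (rule Least_equality) auto
  ultimately show ?thesis
    by simp
qed

lemma decidable_even:
  assumes "recursive n f"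
  shows "decidable n (\<lambda>xs. even (f xs))"
proof -
  have "decidable n (\<lambda>xs. f xs div 2 + f xs div 2 = f xs)"
    using assms by (intro decidable_eq recursive_add recursive_div_2)
  moreover have "even k \<longleftrightarrow> k div 2 + k div 2 = k" for k :: nat
    by presburger
  ultimately show ?thesis
    by simp
qed

section \<open>Functionals with finitely many recursive queries\<close>

lemma list_decode_prefix_code [simp]: "list_decode (prefix_code p n) = map p [0..<n]"
  by (simp add: prefix_code_def)

lemma computable_onI:
  assumes "recursive 2 (\<lambda>zs. A (zs ! 0) (zs ! 1))"
    and "\<And>p k n. A k (prefix_code p n) \<in> {0, Suc (F p k)}"
    and "\<And>p k. \<exists>n. A k (prefix_code p n) = Suc (F p k)"
  shows "computable_on D F"
proof -
  obtain M where M2: "\<And>xs. length xs = 2 \<Longrightarrow> eval M xs (A (xs ! 0) (xs ! 1))"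
    using assms(1) unfolding recursive_def by blast
  have M: "eval M [k, c] (A k c)" for k c
    using M2[of "[k, c]"] by simp
  have "eval M [k, prefix_code p n] (Suc v) \<Longrightarrow> v = F p k" for k p n v
    using M eval_deterministic assms(2) by (metis Suc_inject insertE nat.distinct(1) singletonD)
  moreover have "\<exists>n. eval M [k, prefix_code p n] (Suc (F p k))" for k p
    using M assms(3) by metis
  ultimately show ?thesis
    unfolding computable_on_def by blast
qed

lemma computable_on_two_queries:
  assumes F: "\<And>p k. F p k = G k (p (a k)) (p (b k))"
    and a: "recursive 1 (\<lambda>zs. a (zs ! 0))" and b: "recursive 1 (\<lambda>zs. b (zs ! 0))"
    and G: "recursive 3 (\<lambda>zs. G (zs ! 0) (zs ! 1) (zs ! 2))"
  shows "computable_on D F"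
proof (rule computable_onI)
  define A where "A k c = (if a k < length (list_decode c) \<and> b k < length (list_decode c)
    then Suc (G k (code_nth c (a k)) (code_nth c (b k))) else 0)" for k c
  have "recursive 2 (\<lambda>zs. a (zs ! 0))" "recursive 2 (\<lambda>zs. b (zs ! 0))"
    using recursive_comp1[OF a recursive_proj] recursive_comp1[OF b recursive_proj] by auto
  then show "recursive 2 (\<lambda>zs. A (zs ! 0) (zs ! 1))"
    unfolding A_def
    by (intro recursive_if decidable_conj decidable_less recursive_length_list_decode
        recursive_Suc recursive_comp3[OF G] recursive_code_nth recursive_proj recursive_zero) auto
  show "A k (prefix_code p n) \<in> {0, Suc (F p k)}" for p k n
    by (simp add: A_def F code_nth_eq_nth)
  show "\<exists>n. A k (prefix_code p n) = Suc (F p k)" for p k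
    by (rule exI[of _ "Suc (max (a k) (b k))"])
      (simp add: A_def F code_nth_eq_nth less_Suc_eq_le del: upt_Suc)
qed

section \<open>The product of two open sets\<close>

lemma prefix_iff_nth: "prefix xs ys \<longleftrightarrow> length xs \<le> length ys \<and> (\<forall>i<length xs. xs ! i = ys ! i)"
  (is "_ \<longleftrightarrow> ?nth")
proof
  assume "prefix xs ys"
  then show ?nth
    by (auto simp: prefix_def nth_append)
next
  assume ?nth
  then have "take (length xs) ys = xs"
    by (intro nth_equalityI) auto
  then show "prefix xs ys"
    by (metis take_is_prefix)
qed

lemma prefix_map_upt_iff: "prefix t (map f [0..<n]) \<longleftrightarrow> length t \<le> n \<and> map f [0..<length t] = t"
  by (auto simp: prefix_iff_nth intro: nth_equalityI) (metis add_0 diff_zero nth_map_upt)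

lemma sorted_wrt_map_upt: "strict_mono f \<Longrightarrow> sorted_wrt (<) (map f [0..<n])"
  by (simp add: sorted_wrt_map strict_mono_less)

lemma prod_encode_less: "a < a' \<Longrightarrow> b < b' \<Longrightarrow> prod_encode (a, b) < prod_encode (a', b')"
proof -
  assume "a < a'" "b < b'"
  then have "triangle (Suc (a + b)) \<le> triangle (a' + b')"
    by (intro monoD[of triangle]) (auto simp: mono_iff_le_Suc)
  then show ?thesis
    by (simp add: prod_encode_def)
qed

text \<open>The bound on the length of s lets homogeneity, applied to shifts of a solution,
  force both coordinate sequences of the solution to be strictly increasing.\<close>

definition pair_extends :: "nat list \<Rightarrow> nat list \<Rightarrow> nat list \<Rightarrow> bool" where
  "pair_extends s t u \<longleftrightarrow> 2 \<le> length s \<and>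
     sorted_wrt (<) (map (fst \<circ> prod_decode) s) \<and> sorted_wrt (<) (map (snd \<circ> prod_decode) s) \<and>
     prefix t (map (fst \<circ> prod_decode) s) \<and> prefix u (map (snd \<circ> prod_decode) s)"

lemma pair_extends_iff_nth:
  "pair_extends s t u \<longleftrightarrow> 2 \<le> length s \<and>
     (\<forall>j<length s - 1. fst (prod_decode (s ! j)) < fst (prod_decode (s ! Suc j)) \<and>
                       snd (prod_decode (s ! j)) < snd (prod_decode (s ! Suc j))) \<and>
     length t \<le> length s \<and> (\<forall>j<length t. t ! j = fst (prod_decode (s ! j))) \<and>
     length u \<le> length s \<and> (\<forall>j<length u. u ! j = snd (prod_decode (s ! j)))"
  unfolding pair_extends_def prefix_iff_nth
  by (auto simp: sorted_wrt_iff_nth_Suc_transp)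

lemma sorted_pair_extends:
  assumes "pair_extends s t u"
  shows "sorted_wrt (<) s"
proof -
  have "sorted_wrt (\<lambda>x y. fst (prod_decode x) < fst (prod_decode y) \<and>
                           snd (prod_decode x) < snd (prod_decode y)) s"
    using assms unfolding pair_extends_def sorted_wrt_map sorted_wrt_iff_nth_less by auto
  then show ?thesis
    by (rule sorted_wrt_mono_rel[rotated])
      (metis prod_encode_less prod.collapse prod_decode_inverse)
qed

lemma decidable_pair_extends:
  assumes "recursive n c" and "recursive n a" and "recursive n b"
  shows "decidable n
    (\<lambda>xs. pair_extends (list_decode (c xs)) (list_decode (a xs)) (list_decode (b xs)))"
proof -
  have code: "pair_extends (list_decode c') (list_decode a') (list_decode b') \<longleftrightarrow>
     2 \<le> length (list_decode c') \<and>
     (\<forall>j<length (list_decode c') - 1.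
        fst (prod_decode (code_nth c' j)) < fst (prod_decode (code_nth c' (Suc j))) \<and>
        snd (prod_decode (code_nth c' j)) < snd (prod_decode (code_nth c' (Suc j)))) \<and>
     length (list_decode a') \<le> length (list_decode c') \<and>
     (\<forall>j<length (list_decode a'). code_nth a' j = fst (prod_decode (code_nth c' j))) \<and>
     length (list_decode b') \<le> length (list_decode c') \<and>
     (\<forall>j<length (list_decode b'). code_nth b' j = snd (prod_decode (code_nth c' j)))" for a' b' c'
    unfolding pair_extends_iff_nth by (auto simp: code_nth_eq_nth)
  show ?thesis
    unfolding code
    by (intro decidable_conj decidable_le decidable_all_less decidable_less decidable_eq
        recursive_fst_prod_decode recursive_snd_prod_decode recursive_code_nth recursive_Suc
        recursive_length_list_decode recursive_diff recursive_hd recursive_const assms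
        recursive_tl[OF assms(1)] recursive_tl[OF assms(2)] recursive_tl[OF assms(3)])
qed

definition product_name :: "baire \<Rightarrow> baire" where
  "product_name p k =
    (let c = fst (prod_decode k); i = prod_decode (snd (prod_decode k));
         x = evens p (fst i); y = odds p (snd i)
     in if x \<noteq> 0 \<and> y \<noteq> 0 \<and> pair_extends (list_decode c) (list_decode (x - 1)) (list_decode (y - 1))
        then Suc c else 0)"

lemma product_name_prod_encode:
  "product_name p (prod_encode (c, prod_encode (i1, i2))) =
    (if evens p i1 \<noteq> 0 \<and> odds p i2 \<noteq> 0 \<and>
        pair_extends (list_decode c) (list_decode (evens p i1 - 1)) (list_decode (odds p i2 - 1))
     then Suc c else 0)"
  by (simp add: product_name_def)

lemma product_name_eq_Suc:
  "product_name p k = Suc c \<longleftrightarrow> (\<exists>i1 i2 c1 c2. k = prod_encode (c, prod_encode (i1, i2)) \<and>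
     evens p i1 = Suc c1 \<and> odds p i2 = Suc c2 \<and>
     pair_extends (list_decode c) (list_decode c1) (list_decode c2))"
proof -
  obtain c' i1 i2 where "k = prod_encode (c', prod_encode (i1, i2))"
    by (metis prod_decode_inverse prod.collapse)
  then show ?thesis
    by (auto simp: product_name_prod_encode gr0_conv_Suc)
qed

lemma open_of_product_name:
  "g \<in> open_of (product_name p) \<longleftrightarrow>
     g \<in> RS \<and> (\<exists>n i1 i2 c1 c2. evens p i1 = Suc c1 \<and> odds p i2 = Suc c2 \<and>
       pair_extends (map g [0..<n]) (list_decode c1) (list_decode c2))"
proof
  assume "g \<in> open_of (product_name p)"
  then obtain k c where g: "g \<in> RS" "product_name p k = Suc c"
    and c: "map g [0..<length (list_decode c)] = list_decode c"
    unfolding open_of_def by blast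
  then obtain i1 i2 c1 c2 where "evens p i1 = Suc c1" "odds p i2 = Suc c2"
    and "pair_extends (list_decode c) (list_decode c1) (list_decode c2)"
    unfolding product_name_eq_Suc by blast
  moreover from this(3)
  have "pair_extends (map g [0..<length (list_decode c)]) (list_decode c1) (list_decode c2)"
    by (simp only: c)
  ultimately show "g \<in> RS \<and> (\<exists>n i1 i2 c1 c2. evens p i1 = Suc c1 \<and> odds p i2 = Suc c2 \<and>
     pair_extends (map g [0..<n]) (list_decode c1) (list_decode c2))"
    using g(1) by blast
next
  assume "g \<in> RS \<and> (\<exists>n i1 i2 c1 c2. evens p i1 = Suc c1 \<and> odds p i2 = Suc c2 \<and>
     pair_extends (map g [0..<n]) (list_decode c1) (list_decode c2))"
  then obtain n i1 i2 c1 c2 where "g \<in> RS" "evens p i1 = Suc c1" "odds p i2 = Suc c2"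
    "pair_extends (map g [0..<n]) (list_decode c1) (list_decode c2)"
    by blast
  moreover define c where "c = list_encode (map g [0..<n])"
  ultimately have "product_name p (prod_encode (c, prod_encode (i1, i2))) = Suc c"
    by (simp add: product_name_prod_encode)
  moreover have "map g [0..<length (list_decode c)] = list_decode c"
    by (simp add: c_def)
  ultimately show "g \<in> open_of (product_name p)"
    unfolding open_of_def using \<open>g \<in> RS\<close> by blast
qed

lemma open_name_product_name: "open_name (product_name p)"
  unfolding open_name_def product_name_eq_Suc by (auto dest: sorted_pair_extends)

lemma HS_Int_iff: "f \<in> HS P \<inter> P \<longleftrightarrow> f \<in> RS \<and> (\<forall>g\<in>RS. f \<circ> g \<in> P)"
proof -
  have "id \<in> RS"
    by (simp add: RS_def strict_mono_def)
  then have "(\<forall>g\<in>RS. f \<circ> g \<in> P) \<Longrightarrow> f \<in> P" and "f \<in> P \<Longrightarrow> \<not> (\<forall>g\<in>RS. f \<circ> g \<notin> P)"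
    by (metis comp_id)+
  then show ?thesis
    unfolding HS_def by blast
qed

lemma RS_comp: "f \<in> RS \<Longrightarrow> g \<in> RS \<Longrightarrow> f \<circ> g \<in> RS"
  by (simp add: RS_def strict_mono_def)

lemma product_name_solution:
  assumes f: "f \<in> HS (open_of (evens p)) \<inter> open_of (evens p)"
    and g: "g \<in> HS (open_of (odds p)) \<inter> open_of (odds p)"
  shows "(\<lambda>n. prod_encode (f n, g n)) \<in> HS (open_of (product_name p)) \<inter> open_of (product_name p)"
proof -
  let ?h = "\<lambda>n. prod_encode (f n, g n)"
  have "strict_mono f" "strict_mono g"
    using f g unfolding HS_Int_iff RS_def by simp_all
  then have h: "?h \<in> RS"
    by (simp add: RS_def strict_mono_def prod_encode_less)
  have "?h \<circ> e \<in> open_of (product_name p)" if e: "e \<in> RS" for e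
  proof -
    obtain i1 c1 where i1: "evens p i1 = Suc c1"
      and t: "map (f \<circ> e) [0..<length (list_decode c1)] = list_decode c1"
      using f e unfolding HS_Int_iff open_of_def by auto
    obtain i2 c2 where i2: "odds p i2 = Suc c2"
      and u: "map (g \<circ> e) [0..<length (list_decode c2)] = list_decode c2"
      using g e unfolding HS_Int_iff open_of_def by auto
    define n where "n = max 2 (max (length (list_decode c1)) (length (list_decode c2)))"
    have "strict_mono (f \<circ> e)" "strict_mono (g \<circ> e)"
      using \<open>strict_mono f\<close> \<open>strict_mono g\<close> e by (simp_all add: RS_def strict_mono_def)
    then have "pair_extends (map (?h \<circ> e) [0..<n]) (list_decode c1) (list_decode c2)"
      using t u
      by (simp add: pair_extends_def prefix_map_upt_iff sorted_wrt_map_upt n_def comp_def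
          le_max_iff_disj)
    moreover have "?h \<circ> e \<in> RS"
      using h e by (rule RS_comp)
    ultimately show ?thesis
      using i1 i2 unfolding open_of_product_name by blast
  qed
  with h show ?thesis
    unfolding HS_Int_iff by blast
qed

lemma split_product_solution:
  assumes "h \<in> HS (open_of (product_name p)) \<inter> open_of (product_name p)"
  shows "fst \<circ> prod_decode \<circ> h \<in> HS (open_of (evens p)) \<inter> open_of (evens p)"
    and "snd \<circ> prod_decode \<circ> h \<in> HS (open_of (odds p)) \<inter> open_of (odds p)"
proof -
  have h: "h \<in> RS" "\<And>e. e \<in> RS \<Longrightarrow> h \<circ> e \<in> open_of (product_name p)"
    using assms unfolding HS_Int_iff by blast+
  have "fst (prod_decode (h m)) < fst (prod_decode (h (Suc m))) \<and>
        snd (prod_decode (h m)) < snd (prod_decode (h (Suc m)))" for m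
  proof -
    have "h \<circ> (\<lambda>j. j + m) \<in> open_of (product_name p)"
      by (rule h(2)) (simp add: RS_def strict_mono_def)
    then obtain n t u where "pair_extends (map (h \<circ> (\<lambda>j. j + m)) [0..<n]) t u"
      unfolding open_of_product_name by blast
    then show ?thesis
      unfolding pair_extends_def by (auto dest!: sorted_wrt_nth_less[where i=0 and j=1])
  qed
  then have mono: "strict_mono (fst \<circ> prod_decode \<circ> h)" "strict_mono (snd \<circ> prod_decode \<circ> h)"
    by (simp_all add: strict_mono_Suc_iff)
  have "fst \<circ> prod_decode \<circ> h \<circ> e \<in> open_of (evens p) \<and>
        snd \<circ> prod_decode \<circ> h \<circ> e \<in> open_of (odds p)"
    if e: "e \<in> RS" for e
  proof -
    obtain n i1 i2 c1 c2 where "evens p i1 = Suc c1" "odds p i2 = Suc c2"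
      and "pair_extends (map (h \<circ> e) [0..<n]) (list_decode c1) (list_decode c2)"
      using h(2)[OF e] unfolding open_of_product_name by blast
    moreover have "fst \<circ> prod_decode \<circ> h \<circ> e \<in> RS" "snd \<circ> prod_decode \<circ> h \<circ> e \<in> RS"
      using mono e by (simp_all add: RS_def strict_mono_def)
    ultimately show ?thesis
      by (auto simp: open_of_def pair_extends_def prefix_map_upt_iff comp_assoc)
  qed
  with mono show "fst \<circ> prod_decode \<circ> h \<in> HS (open_of (evens p)) \<inter> open_of (evens p)"
    and "snd \<circ> prod_decode \<circ> h \<in> HS (open_of (odds p)) \<inter> open_of (odds p)"
    unfolding HS_Int_iff RS_def by simp_all
qed

definition split_solution :: "baire \<Rightarrow> baire" where
  "split_solution h k =
    (if even k then fst (prod_decode (h (k div 2))) else snd (prod_decode (h (k div 2))))"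

lemma evens_split_solution: "evens (split_solution h) = fst \<circ> prod_decode \<circ> h"
  by (simp add: fun_eq_iff evens_def split_solution_def)

lemma odds_split_solution: "odds (split_solution h) = snd \<circ> prod_decode \<circ> h"
  by (simp add: fun_eq_iff odds_def split_solution_def)

lemma computable_product_name: "computable_on D product_name"
proof -
  let ?i = "\<lambda>k. prod_decode (snd (prod_decode k))"
  have queries: "recursive 1 (\<lambda>zs. 2 * fst (?i (zs ! 0)))"
    "recursive 1 (\<lambda>zs. Suc (2 * snd (?i (zs ! 0))))"
    unfolding mult_2
    by (intro recursive_Suc recursive_add recursive_fst_prod_decode recursive_snd_prod_decode
        recursive_proj; simp)+
  have "recursive 3 (\<lambda>zs. if zs ! 1 \<noteq> 0 \<and> zs ! 2 \<noteq> 0 \<and>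
      pair_extends (list_decode (fst (prod_decode (zs ! 0))))
        (list_decode (zs ! 1 - 1)) (list_decode (zs ! 2 - 1))
    then Suc (fst (prod_decode (zs ! 0))) else 0)"
    by (intro recursive_if decidable_conj decidable_neg decidable_eq decidable_pair_extends
        recursive_Suc recursive_fst_prod_decode recursive_diff recursive_proj recursive_const)
      simp_all
  from queries this show ?thesis
    by (rule computable_on_two_queries[rotated])
      (simp add: product_name_def evens_def odds_def Let_def)
qed

lemma computable_split_solution: "computable_on D split_solution"
proof -
  have half: "recursive 1 (\<lambda>zs. zs ! 0 div 2)"
    by (intro recursive_div_2 recursive_proj) simp
  have "recursive 3
      (\<lambda>zs. if even (zs ! 0) then fst (prod_decode (zs ! 1)) else snd (prod_decode (zs ! 1)))"
    by (intro recursive_if decidable_even recursive_fst_prod_decode recursive_snd_prod_decode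
        recursive_proj) simp_all
  from half half this show ?thesis
    by (rule computable_on_two_queries[rotated]) (simp add: split_solution_def)
qed

lemma product_name_FindHS_dom: "p \<in> par_dom FindHS_dom FindHS_dom \<Longrightarrow> product_name p \<in> FindHS_dom"
  unfolding par_dom_def FindHS_dom_def using open_name_product_name product_name_solution by blast

lemma split_solution_par_rel:
  "FindHS_rel (product_name p) h \<Longrightarrow> par_rel FindHS_rel FindHS_rel p (split_solution h)"
  unfolding FindHS_rel_def par_rel_def evens_split_solution odds_split_solution
  using split_product_solution by blast

theorem mainTheorem10:
  shows "sW_reducible (par_dom FindHS_dom FindHS_dom) (par_rel FindHS_rel FindHS_rel)
           FindHS_dom FindHS_rel"
  unfolding sW_reducible_def
proof (intro exI conjI allI impI)
  show "computable_on (par_dom FindHS_dom FindHS_dom) product_name"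
    by (rule computable_product_name)
  show "computable_on {G (product_name p) |G p. realizes FindHS_dom FindHS_rel G \<and>
      p \<in> par_dom FindHS_dom FindHS_dom} split_solution"
    by (rule computable_split_solution)
  fix G
  assume "realizes FindHS_dom FindHS_rel G"
  then show "realizes (par_dom FindHS_dom FindHS_dom) (par_rel FindHS_rel FindHS_rel)
      (split_solution \<circ> G \<circ> product_name)"
    unfolding realizes_def using product_name_FindHS_dom split_solution_par_rel by simp
qed

end
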